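(* Consider a sequence of finite populations indexed by $n\to\infty$, each satisfying Assumption 1, Assumption 2 and the null hypothesis $H_0:\ T_i(1)=T_i(0)$ for all $i$, and suppose Condition 2 holds; condition on all potential event times. For each $1\le k\le K$: (i) if the limits of $d_k/n$, $G_1(t_k)$ and $G_0(t_k)$ are all positive and the limit of $h_k$ is less than $1$, then $$\frac{\mathbb{E}(V_k\mid\boldsymbol{T}(1),\boldsymbol{T}(0))}{n}=g_k\phi_k(1-\phi_k)\frac{n_k}{n}h_k(1-h_k)+o(1)\quad\text{and}\quad\frac{V_k}{n}=\frac{\mathbb{E}(V_k\mid\boldsymbol{T}(1),\boldsymbol{T}(0))}{n}+o_{\Pr}(1);$$ (ii) otherwise (at least one of these three limits is zero, or all three are positive but $\lim h_k=1$), $\mathbb{E}(V_k\mid\boldsymbol{T}(1),\boldsymbol{T}(0))/n=o(1)$ and $V_k/n=o_{\Pr}(1)$.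
   Context: Unit $i$ ($1\le i\le n$) has potential event times $T_i(1),T_i(0)\ge 0$ (fixed constants), potential censoring times $C_i(1),C_i(0)\in[0,\infty]$, treatment indicator $Z_i\in\{0,1\}$; bold letters denote $n$-vectors. Assumption 1: conditional on all potential event and censoring times, the $Z_i$ are i.i.d. Bernoulli$(p_1)$, $p_1=1-p_0\in(0,1)$. Assumption 2: $(\boldsymbol{C}(1),\boldsymbol{C}(0))$ is independent of $(\boldsymbol{T}(1),\boldsymbol{T}(0))$ and the pairs $(C_i(1),C_i(0))$ are i.i.d. across $i$. $G_z(c)=\Pr(C_i(z)\ge c)$, $G(t)=p_1G_1(t)+p_0G_0(t)$. Realized: $W_i=\min\{T_i,C_i\}$, $\Delta_i=\mathbb{1}(T_i\le C_i)$ with $T_i=Z_iT_i(1)+(1-Z_i)T_i(0)$, $C_i=Z_iC_i(1)+(1-Z_i)C_i(0)$. Let $t_1<\dots<t_K$ be the distinct values of $\{T_i(0)\}$, $d_k=\#\{i:T_i(0)=t_k\}$, $n_k=\#\{i:T_i(0)\ge t_k\}$, $h_k=d_k/n_k$, $g_k=G(t_k)$, $\phi_k=p_1G_1(t_k)/G(t_k)$; $N_{1k},N_{0k}$ the numbers of treated / control units with $W_i\ge t_k$, $N_k=N_{1k}+N_{0k}$, $D_k=\sum_i\Delta_i\mathbb{1}(W_i=t_k)$, $V_k=D_k(N_k-D_k)N_{1k}N_{0k}/\{N_k^2(N_k-1)\}$ (convention $0/0:=0$). Quantities may depend on $n$. Condition 2: as $n\to\infty$, $K$ is fixed, and for $z=0,1$,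 $1\le k\le K$: $p_z$ has a positive limit; $d_k/n$ has a limit; $G_z(t_k)$ has a limit; and for at least one $k$, $d_k/n$, $G_1(t_k)$, $G_0(t_k)$ have positive limits and $\lim h_k<1$. *)

theory Defs
  imports "HOL-Probability.Probability"
begin

text \<open>Population n has units 0..n-1.  Under H0 the potential event times coincide,
  T n i = T_i(1) = T_i(0) (fixed constants).  Cd n is the common law of the pair
  (C_i(1), C_i(0)) with values in [0,\<infinity>] (ennreal).  p n is p_1.
  Distinct event-time values are indexed 0..K-1 (paper: 1..K).\<close>

definition tpt :: "(nat \<Rightarrow> nat \<Rightarrow> real) \<Rightarrow> nat \<Rightarrow> nat \<Rightarrow> real" where
  "tpt T n k = sorted_list_of_set (T n ` {..<n}) ! k"

definition Kn :: "(nat \<Rightarrow> nat \<Rightarrow> real) \<Rightarrow> nat \<Rightarrow> nat" where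
  "Kn T n = card (T n ` {..<n})"

definition dk :: "(nat \<Rightarrow> nat \<Rightarrow> real) \<Rightarrow> nat \<Rightarrow> nat \<Rightarrow> nat" where
  "dk T n k = card {i. i < n \<and> T n i = tpt T n k}"

definition nk :: "(nat \<Rightarrow> nat \<Rightarrow> real) \<Rightarrow> nat \<Rightarrow> nat \<Rightarrow> nat" where
  "nk T n k = card {i. i < n \<and> T n i \<ge> tpt T n k}"

definition hk :: "(nat \<Rightarrow> nat \<Rightarrow> real) \<Rightarrow> nat \<Rightarrow> nat \<Rightarrow> real" where
  "hk T n k = real (dk T n k) / real (nk T n k)"

text \<open>G_z(c) = Pr(C_i(z) \<ge> c); z = True means treatment 1 (first component).\<close>
definition Gz :: "(nat \<Rightarrow> (ennreal \<times> ennreal) measure) \<Rightarrow> nat \<Rightarrow> bool \<Rightarrow> real \<Rightarrow> real" where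
  "Gz Cd n z c = measure (Cd n) {x \<in> space (Cd n). ennreal c \<le> (if z then fst x else snd x)}"

definition Gmix :: "(nat \<Rightarrow> real) \<Rightarrow> (nat \<Rightarrow> (ennreal \<times> ennreal) measure) \<Rightarrow> nat \<Rightarrow> real \<Rightarrow> real" where
  "Gmix p Cd n c = p n * Gz Cd n True c + (1 - p n) * Gz Cd n False c"

definition gk where
  "gk p Cd T n k = Gmix p Cd n (tpt T n k)"

definition phik where
  "phik p Cd T n k = p n * Gz Cd n True (tpt T n k) / Gmix p Cd n (tpt T n k)"

text \<open>Probability space of population n: unit i carries (Z_i, (C_i(1), C_i(0))),
  independent across units, Z_i ~ Bernoulli(p_1) independent of the censoring pair
  (Assumptions 1 and 2, conditional on the potential event times).\<close>
definition popM :: "(nat \<Rightarrow> real) \<Rightarrow> (nat \<Rightarrow> (ennreal \<times> ennreal) measure) \<Rightarrow> nat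
    \<Rightarrow> (nat \<Rightarrow> bool \<times> ennreal \<times> ennreal) measure" where
  "popM p Cd n = PiM {..<n} (\<lambda>_. measure_pmf (bernoulli_pmf (p n)) \<Otimes>\<^sub>M Cd n)"

definition Zr :: "(nat \<Rightarrow> bool \<times> ennreal \<times> ennreal) \<Rightarrow> nat \<Rightarrow> bool" where
  "Zr \<omega> i = fst (\<omega> i)"

definition Cr :: "(nat \<Rightarrow> bool \<times> ennreal \<times> ennreal) \<Rightarrow> nat \<Rightarrow> ennreal" where
  "Cr \<omega> i = (if Zr \<omega> i then fst (snd (\<omega> i)) else snd (snd (\<omega> i)))"

definition Wr where
  "Wr T n \<omega> i = min (ennreal (T n i)) (Cr \<omega> i)"

definition Deltar where
  "Deltar T n \<omega> i = (ennreal (T n i) \<le> Cr \<omega> i)"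

definition N1k where
  "N1k T n k \<omega> = card {i. i < n \<and> Zr \<omega> i \<and> ennreal (tpt T n k) \<le> Wr T n \<omega> i}"

definition N0k where
  "N0k T n k \<omega> = card {i. i < n \<and> \<not> Zr \<omega> i \<and> ennreal (tpt T n k) \<le> Wr T n \<omega> i}"

definition Nk where
  "Nk T n k \<omega> = N1k T n k \<omega> + N0k T n k \<omega>"

definition Dk where
  "Dk T n k \<omega> = card {i. i < n \<and> Deltar T n \<omega> i \<and> Wr T n \<omega> i = ennreal (tpt T n k)}"

text \<open>Division by zero yields 0 in Isabelle, matching the convention 0/0 := 0.\<close>
definition Vk :: "(nat \<Rightarrow> nat \<Rightarrow> real) \<Rightarrow> nat \<Rightarrow> nat \<Rightarrow> (nat \<Rightarrow> bool \<times> ennreal \<times> ennreal) \<Rightarrow> real" where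
  "Vk T n k \<omega> = real (Dk T n k \<omega>) * (real (Nk T n k \<omega>) - real (Dk T n k \<omega>))
      * real (N1k T n k \<omega>) * real (N0k T n k \<omega>)
      / ((real (Nk T n k \<omega>))\<^sup>2 * (real (Nk T n k \<omega>) - 1))"

end

(* Fix k and write t = t_k.  The counts D_k, N_1k and N_0k are sums of independent indicators of
   unit-level events, so by Hoeffding's inequality D_k/n, N_1k/n and N_0k/n concentrate around
   d_k g_k/n, n_k p_1 G_1(t)/n and n_k p_0 G_0(t)/n.  Moreover V_k/n = F(D_k/n, N_1k/n, N_0k/n, 1/n)
   for F(d, x, y, w) = d (x + y - d) x y / ((x + y)^2 (x + y - w)), which is continuous at the limit
   point as soon as lim d_k/n > 0 and lim g_k > 0; the continuous mapping theorem then gives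
   V_k/n -> F(limits) in probability, and F(limits) is the limit of g_k phi_k (1 - phi_k) (n_k/n) h_k (1 - h_k).
   Otherwise V_k/n is squeezed between 0 and one of D_k/n, N_zk/n or (N_k - D_k)/n, and this bound
   tends to 0 in probability because lim d_k/n = 0, lim G_z(t) = 0 or lim h_k = 1 respectively.
   Since 0 <= V_k/n <= 1, convergence in probability to a constant carries over to expectations. *)

theory Submission
  imports Defs
begin

section \<open>Convergence in probability along a sequence of probability spaces\<close>

definition tendsto_prob :: "(nat \<Rightarrow> 'a measure) \<Rightarrow> (nat \<Rightarrow> 'a \<Rightarrow> 'b::metric_space) \<Rightarrow> (nat \<Rightarrow> 'b) \<Rightarrow> bool"
  where "tendsto_prob M X c \<longleftrightarrow>
    (\<forall>\<epsilon>>0. (\<lambda>n. measure (M n) {\<omega> \<in> space (M n). dist (X n \<omega>) (c n) > \<epsilon>}) \<longlonglongrightarrow> 0)"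

lemma tendsto_prob_cover:
  fixes X :: "nat \<Rightarrow> 'a \<Rightarrow> 'b::{metric_space, second_countable_topology}"
    and X' :: "nat \<Rightarrow> 'a \<Rightarrow> 'c::{metric_space, second_countable_topology}"
  assumes prob: "\<And>n. prob_space (M n)"
    and X: "tendsto_prob M X c" "\<And>n. X n \<in> borel_measurable (M n)"
    and X': "tendsto_prob M X' c'" "\<And>n. X' n \<in> borel_measurable (M n)"
    and cover: "\<And>\<epsilon>. \<epsilon> > 0 \<Longrightarrow> \<exists>\<delta>>0. \<forall>\<^sub>F n in sequentially. \<forall>\<omega>\<in>space (M n).
        dist (Y n \<omega>) (d n) > \<epsilon> \<longrightarrow> dist (X n \<omega>) (c n) > \<delta> \<or> dist (X' n \<omega>) (c' n) > \<delta>"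
  shows "tendsto_prob M Y d"
  unfolding tendsto_prob_def
proof (intro allI impI)
  fix \<epsilon> :: real assume "\<epsilon> > 0"
  then obtain \<delta> where "\<delta> > 0" and ev: "\<forall>\<^sub>F n in sequentially. \<forall>\<omega>\<in>space (M n).
      dist (Y n \<omega>) (d n) > \<epsilon> \<longrightarrow> dist (X n \<omega>) (c n) > \<delta> \<or> dist (X' n \<omega>) (c' n) > \<delta>"
    using cover by blast
  define A where "A n = {\<omega> \<in> space (M n). dist (X n \<omega>) (c n) > \<delta>}" for n
  define A' where "A' n = {\<omega> \<in> space (M n). dist (X' n \<omega>) (c' n) > \<delta>}" for n
  have "(\<lambda>\<omega>. dist (X n \<omega>) (c n)) \<in> borel_measurable (M n)"
    "(\<lambda>\<omega>. dist (X' n \<omega>) (c' n)) \<in> borel_measurable (M n)" for n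
    using X(2) X'(2) by (simp_all add: borel_measurable_dist)
  then have sets: "A n \<in> sets (M n)" "A' n \<in> sets (M n)" for n
    unfolding A_def A'_def by (simp_all add: borel_measurable_iff_greater)
  have "(\<lambda>n. measure (M n) (A n)) \<longlonglongrightarrow> 0" "(\<lambda>n. measure (M n) (A' n)) \<longlonglongrightarrow> 0"
    unfolding A_def A'_def using X(1) X'(1) \<open>\<delta> > 0\<close> by (simp_all add: tendsto_prob_def)
  then have lim: "(\<lambda>n. measure (M n) (A n) + measure (M n) (A' n)) \<longlonglongrightarrow> 0"
    by (rule tendsto_add_zero)
  have bound: "\<forall>\<^sub>F n in sequentially.
      measure (M n) {\<omega> \<in> space (M n). dist (Y n \<omega>) (d n) > \<epsilon>} \<le> measure (M n) (A n) + measure (M n) (A' n)"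
    using ev
  proof eventually_elim
    case (elim n)
    interpret prob_space "M n" by (rule prob)
    have "measure (M n) {\<omega> \<in> space (M n). dist (Y n \<omega>) (d n) > \<epsilon>} \<le> measure (M n) (A n \<union> A' n)"
      using elim sets by (intro finite_measure_mono) (auto simp: A_def A'_def)
    also have "\<dots> \<le> measure (M n) (A n) + measure (M n) (A' n)"
      using sets by (rule measure_Un_le)
    finally show ?case .
  qed
  show "(\<lambda>n. measure (M n) {\<omega> \<in> space (M n). dist (Y n \<omega>) (d n) > \<epsilon>}) \<longlonglongrightarrow> 0"
    by (rule tendsto_sandwich[OF always_eventually[OF allI[OF measure_nonneg]] bound tendsto_const lim])
qed

lemma tendsto_prob_transfer:
  fixes X :: "nat \<Rightarrow> 'a \<Rightarrow> 'b::{metric_space, second_countable_topology}"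
  assumes prob: "\<And>n. prob_space (M n)"
    and X: "tendsto_prob M X c" "\<And>n. X n \<in> borel_measurable (M n)"
    and cover: "\<And>\<epsilon>. \<epsilon> > 0 \<Longrightarrow> \<exists>\<delta>>0. \<forall>\<^sub>F n in sequentially. \<forall>\<omega>\<in>space (M n).
        dist (Y n \<omega>) (d n) > \<epsilon> \<longrightarrow> dist (X n \<omega>) (c n) > \<delta>"
  shows "tendsto_prob M Y d"
  using prob X X
proof (rule tendsto_prob_cover)
  fix \<epsilon> :: real assume "\<epsilon> > 0"
  then show "\<exists>\<delta>>0. \<forall>\<^sub>F n in sequentially. \<forall>\<omega>\<in>space (M n).
      dist (Y n \<omega>) (d n) > \<epsilon> \<longrightarrow> dist (X n \<omega>) (c n) > \<delta> \<or> dist (X n \<omega>) (c n) > \<delta>"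
    using cover by auto
qed

lemma dist_Pair_le: "dist (a, b) (a', b') \<le> dist a a' + dist b b'"
  unfolding dist_Pair_Pair by (rule sqrt_sum_squares_le_sum) auto

lemma tendsto_prob_Pair:
  fixes X :: "nat \<Rightarrow> 'a \<Rightarrow> 'b::{metric_space, second_countable_topology}"
    and X' :: "nat \<Rightarrow> 'a \<Rightarrow> 'c::{metric_space, second_countable_topology}"
  assumes prob: "\<And>n. prob_space (M n)"
    and X: "tendsto_prob M X c" "\<And>n. X n \<in> borel_measurable (M n)"
    and X': "tendsto_prob M X' c'" "\<And>n. X' n \<in> borel_measurable (M n)"
  shows "tendsto_prob M (\<lambda>n \<omega>. (X n \<omega>, X' n \<omega>)) (\<lambda>n. (c n, c' n))"
  using prob X X'
proof (rule tendsto_prob_cover)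
  fix \<epsilon> :: real assume "\<epsilon> > 0"
  have "dist (X n \<omega>, X' n \<omega>) (c n, c' n) > \<epsilon> \<longrightarrow> dist (X n \<omega>) (c n) > \<epsilon>/2 \<or> dist (X' n \<omega>) (c' n) > \<epsilon>/2"
    for n \<omega> using dist_Pair_le[of "X n \<omega>" "X' n \<omega>" "c n" "c' n"] by linarith
  then show "\<exists>\<delta>>0. \<forall>\<^sub>F n in sequentially. \<forall>\<omega>\<in>space (M n). dist (X n \<omega>, X' n \<omega>) (c n, c' n) > \<epsilon>
      \<longrightarrow> dist (X n \<omega>) (c n) > \<delta> \<or> dist (X' n \<omega>) (c' n) > \<delta>"
    using \<open>\<epsilon> > 0\<close> by (intro exI[of _ "\<epsilon>/2"]) auto
qed

lemma tendsto_prob_const: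
  assumes "c \<longlonglongrightarrow> L"
  shows "tendsto_prob M (\<lambda>n _. c n) (\<lambda>_. L)"
  unfolding tendsto_prob_def
proof (intro allI impI)
  fix \<epsilon> :: real assume "\<epsilon> > 0"
  with assms have "\<forall>\<^sub>F n in sequentially. dist (c n) L < \<epsilon>" by (rule tendstoD)
  then have "\<forall>\<^sub>F n in sequentially. measure (M n) {\<omega> \<in> space (M n). dist (c n) L > \<epsilon>} = 0"
    by eventually_elim auto
  then show "(\<lambda>n. measure (M n) {\<omega> \<in> space (M n). dist (c n) L > \<epsilon>}) \<longlonglongrightarrow> 0"
    by (rule tendsto_eventually)
qed

lemma tendsto_prob_shift:
  fixes X :: "nat \<Rightarrow> 'a \<Rightarrow> 'b::{metric_space, second_countable_topology}"
  assumes prob: "\<And>n. prob_space (M n)"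
    and X: "tendsto_prob M X c" "\<And>n. X n \<in> borel_measurable (M n)"
    and cd: "(\<lambda>n. dist (c n) (d n)) \<longlonglongrightarrow> 0"
  shows "tendsto_prob M X d"
  using prob X
proof (rule tendsto_prob_transfer)
  fix \<epsilon> :: real assume "\<epsilon> > 0"
  have tri: "dist (X n \<omega>) (c n) > \<epsilon>/2" if "dist (c n) (d n) < \<epsilon>/2" "dist (X n \<omega>) (d n) > \<epsilon>" for n \<omega>
    using that dist_triangle[of "X n \<omega>" "d n" "c n"] by linarith
  have "\<forall>\<^sub>F n in sequentially. dist (c n) (d n) < \<epsilon>/2"
    using tendstoD[OF cd, of "\<epsilon>/2"] \<open>\<epsilon> > 0\<close> by simp
  then have "\<forall>\<^sub>F n in sequentially. \<forall>\<omega>\<in>space (M n). dist (X n \<omega>) (d n) > \<epsilon> \<longrightarrow> dist (X n \<omega>) (c n) > \<epsilon>/2"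
    by eventually_elim (blast intro: tri)
  then show "\<exists>\<delta>>0. \<forall>\<^sub>F n in sequentially. \<forall>\<omega>\<in>space (M n). dist (X n \<omega>) (d n) > \<epsilon> \<longrightarrow> dist (X n \<omega>) (c n) > \<delta>"
    using \<open>\<epsilon> > 0\<close> by (intro exI[of _ "\<epsilon>/2"]) auto
qed

lemma tendsto_prob_continuous_map:
  fixes X :: "nat \<Rightarrow> 'a \<Rightarrow> 'b::{metric_space, second_countable_topology}"
    and g :: "'b \<Rightarrow> 'c::metric_space"
  assumes prob: "\<And>n. prob_space (M n)"
    and X: "tendsto_prob M X c" "\<And>n. X n \<in> borel_measurable (M n)"
    and c: "c \<longlonglongrightarrow> L" and g: "isCont g L"
  shows "tendsto_prob M (\<lambda>n \<omega>. g (X n \<omega>)) (\<lambda>_. g L)"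
  using prob
proof (rule tendsto_prob_transfer)
  show "tendsto_prob M X (\<lambda>_. L)"
    using prob X tendsto_dist_iff[THEN iffD1, OF c] by (rule tendsto_prob_shift)
  show "X n \<in> borel_measurable (M n)" for n by (rule X(2))
  fix \<epsilon> :: real assume "\<epsilon> > 0"
  then obtain s where "s > 0" and s: "\<And>z. dist z L < s \<Longrightarrow> dist (g z) (g L) < \<epsilon>"
    using g unfolding continuous_at_eps_delta by blast
  have "dist (X n \<omega>) L > s/2" if "dist (g (X n \<omega>)) (g L) > \<epsilon>" for n \<omega>
  proof (rule ccontr)
    assume "\<not> dist (X n \<omega>) L > s/2"
    then have "dist (X n \<omega>) L < s" using \<open>s > 0\<close> by linarith
    then show False using s that by fastforce
  qed
  then show "\<exists>\<delta>>0. \<forall>\<^sub>F n in sequentially. \<forall>\<omega>\<in>space (M n). dist (g (X n \<omega>)) (g L) > \<epsilon> \<longrightarrow> dist (X n \<omega>) L > \<delta>"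
    using \<open>s > 0\<close> by (intro exI[of _ "s/2"]) auto
qed

lemma tendsto_prob_dominated:
  fixes X Y :: "nat \<Rightarrow> 'a \<Rightarrow> real"
  assumes prob: "\<And>n. prob_space (M n)"
    and X: "tendsto_prob M X (\<lambda>_. 0)" "\<And>n. X n \<in> borel_measurable (M n)"
    and dom: "\<forall>\<^sub>F n in sequentially. \<forall>\<omega>\<in>space (M n). 0 \<le> Y n \<omega> \<and> Y n \<omega> \<le> X n \<omega>"
  shows "tendsto_prob M Y (\<lambda>_. 0)"
  using prob X
proof (rule tendsto_prob_transfer)
  fix \<epsilon> :: real assume "\<epsilon> > 0"
  from dom have "\<forall>\<^sub>F n in sequentially. \<forall>\<omega>\<in>space (M n). dist (Y n \<omega>) 0 > \<epsilon> \<longrightarrow> dist (X n \<omega>) 0 > \<epsilon>"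
    by eventually_elim (auto simp: dist_real_def)
  then show "\<exists>\<delta>>0. \<forall>\<^sub>F n in sequentially. \<forall>\<omega>\<in>space (M n). dist (Y n \<omega>) 0 > \<epsilon> \<longrightarrow> dist (X n \<omega>) 0 > \<delta>"
    using \<open>\<epsilon> > 0\<close> by blast
qed

lemma expectation_tendsto:
  fixes Y :: "nat \<Rightarrow> 'a \<Rightarrow> real"
  assumes prob: "\<And>n. prob_space (M n)" and meas: "\<And>n. Y n \<in> borel_measurable (M n)"
    and bound: "\<And>n \<omega>. \<omega> \<in> space (M n) \<Longrightarrow> \<bar>Y n \<omega>\<bar> \<le> B"
    and Y: "tendsto_prob M Y (\<lambda>_. L)"
  shows "(\<lambda>n. integral\<^sup>L (M n) (Y n)) \<longlonglongrightarrow> L"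
  unfolding tendsto_iff dist_real_def
proof (intro allI impI)
  fix e :: real assume "e > 0"
  define C where "C = \<bar>B\<bar> + \<bar>L\<bar>"
  have "0 \<le> C" by (simp add: C_def)
  define r where "r = e / (2 * (C + 1))"
  have "r > 0" using \<open>e > 0\<close> \<open>0 \<le> C\<close> by (simp add: r_def)
  have "(\<lambda>n. measure (M n) {\<omega> \<in> space (M n). dist (Y n \<omega>) L > e/2}) \<longlonglongrightarrow> 0"
    using \<open>e > 0\<close> by (intro Y[unfolded tendsto_prob_def, rule_format]) simp
  from order_tendstoD(2)[OF this \<open>r > 0\<close>]
  show "\<forall>\<^sub>F n in sequentially. \<bar>integral\<^sup>L (M n) (Y n) - L\<bar> < e"
  proof eventually_elim
    case (elim n)
    interpret prob_space "M n" by (rule prob)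
    define A where "A = {\<omega> \<in> space (M n). dist (Y n \<omega>) L > e/2}"
    have A: "A \<in> sets (M n)" unfolding A_def using meas[of n] by measurable
    have int: "integrable (M n) (Y n)"
      using bound meas by (intro integrable_const_bound[where B=B]) auto
    have "\<bar>integral\<^sup>L (M n) (Y n) - L\<bar> = \<bar>integral\<^sup>L (M n) (\<lambda>\<omega>. Y n \<omega> - L)\<bar>"
      using int by (simp add: prob_space)
    also have "\<dots> \<le> integral\<^sup>L (M n) (\<lambda>\<omega>. \<bar>Y n \<omega> - L\<bar>)"
      by (rule integral_abs_bound)
    also have "\<dots> \<le> integral\<^sup>L (M n) (\<lambda>\<omega>. e/2 + C * indicator A \<omega>)"
    proof (rule integral_mono)
      show "integrable (M n) (\<lambda>\<omega>. e/2 + C * indicator A \<omega>)"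
        using A by (intro Bochner_Integration.integrable_add integrable_mult_right integrable_real_indicator)
          (auto simp: emeasure_eq_measure)
      fix \<omega> assume "\<omega> \<in> space (M n)"
      then show "\<bar>Y n \<omega> - L\<bar> \<le> e/2 + C * indicator A \<omega>"
        using bound[of \<omega> n] \<open>e > 0\<close> \<open>0 \<le> C\<close>
        by (cases "\<omega> \<in> A") (auto simp: A_def C_def dist_real_def)
    qed (use int in auto)
    also have "\<dots> = e/2 + C * measure (M n) A"
      using A by (simp add: prob_space emeasure_eq_measure)
    also have "\<dots> < e"
    proof -
      have "C * measure (M n) A \<le> C * r"
        using elim \<open>0 \<le> C\<close> unfolding A_def by (intro mult_left_mono) auto
      also have "\<dots> < e / 2"
        using \<open>e > 0\<close> \<open>0 \<le> C\<close> unfolding r_def by (simp add: field_simps)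
      finally show ?thesis by simp
    qed
    finally show ?case .
  qed
qed

lemma tendsto_prob_expectation:
  fixes Y :: "nat \<Rightarrow> 'a \<Rightarrow> real"
  assumes prob: "\<And>n. prob_space (M n)" and meas: "\<And>n. Y n \<in> borel_measurable (M n)"
    and bound: "\<And>n \<omega>. \<omega> \<in> space (M n) \<Longrightarrow> \<bar>Y n \<omega>\<bar> \<le> B"
    and Y: "tendsto_prob M Y (\<lambda>_. L)"
  shows "tendsto_prob M Y (\<lambda>n. integral\<^sup>L (M n) (Y n))"
proof (rule tendsto_prob_shift[OF prob Y meas])
  have "(\<lambda>n. dist (integral\<^sup>L (M n) (Y n)) L) \<longlonglongrightarrow> 0"
    using expectation_tendsto[OF assms] by (rule tendsto_dist_iff[THEN iffD1])
  then show "(\<lambda>n. dist L (integral\<^sup>L (M n) (Y n))) \<longlonglongrightarrow> 0"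
    by (simp only: dist_commute)
qed

section \<open>Frequencies of independent events\<close>

lemma indep_vars_PiM_components:
  assumes "\<And>i. i \<in> I \<Longrightarrow> prob_space (M i)"
  shows "prob_space.indep_vars (PiM I M) M (\<lambda>i \<omega>. \<omega> i) I"
proof -
  interpret P: prob_space "PiM I M" by (rule prob_space_PiM) (rule assms)
  show ?thesis
  proof (cases "I = {}")
    case True
    then show ?thesis by (subst P.indep_vars_def, subst P.indep_sets_def) simp_all
  next
    case False
    show ?thesis
    proof (subst P.indep_vars_iff_distr_eq_PiM'[OF False])
      show "(\<lambda>\<omega>. \<omega> i) \<in> measurable (PiM I M) (M i)" if "i \<in> I" for i
        using that by (rule measurable_component_singleton)
      have "distr (PiM I M) (PiM I M) (\<lambda>x. restrict x I) = distr (PiM I M) (PiM I M) (\<lambda>x. x)"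
        by (rule distr_cong) (auto simp: space_PiM)
      also have "\<dots> = PiM I (\<lambda>i. distr (PiM I M) (M i) (\<lambda>\<omega>. \<omega> i))"
        by (auto intro!: PiM_cong simp: distr_PiM_component assms)
      finally show "distr (PiM I M) (PiM I M) (\<lambda>x. restrict x I) = PiM I (\<lambda>i. distr (PiM I M) (M i) (\<lambda>\<omega>. \<omega> i))" .
    qed
  qed
qed

lemma measure_PiM_component:
  assumes "\<And>i. i \<in> I \<Longrightarrow> prob_space (M i)" and "i \<in> I" and "A \<in> sets (M i)"
  shows "measure (PiM I M) {\<omega> \<in> space (PiM I M). \<omega> i \<in> A} = measure (M i) A"
proof -
  have "measure (PiM I M) {\<omega> \<in> space (PiM I M). \<omega> i \<in> A} = measure (distr (PiM I M) (M i) (\<lambda>\<omega>. \<omega> i)) A"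
    using assms by (subst measure_distr) (auto simp: vimage_def Int_def conj_commute)
  then show ?thesis using assms by (simp add: distr_PiM_component)
qed

lemma card_eq_sum_indicator:
  fixes n :: nat
  shows "real (card {i. i < n \<and> \<omega> i \<in> A i}) = (\<Sum>i<n. indicator (A i) (\<omega> i))"
proof -
  have "(\<Sum>i<n. indicator (A i) (\<omega> i)) = (\<Sum>i<n. of_bool (\<omega> i \<in> A i) :: real)"
    by (simp add: indicator_def)
  also have "\<dots> = real (card ({..<n} \<inter> {i. \<omega> i \<in> A i}))"
    by (rule sum_of_bool_eq; rule finite_lessThan)
  also have "{..<n} \<inter> {i. \<omega> i \<in> A i} = {i. i < n \<and> \<omega> i \<in> A i}" by auto
  finally show ?thesis ..
qed

lemma borel_measurable_card_PiM:
  fixes n :: nat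
  assumes "\<And>i. A i \<in> sets M"
  shows "(\<lambda>\<omega>. real (card {i. i < n \<and> \<omega> i \<in> A i})) \<in> borel_measurable (PiM {..<n} (\<lambda>_. M))"
  unfolding card_eq_sum_indicator using assms by measurable

lemma frequency_deviation_bound:
  assumes M0: "prob_space M0" and A: "\<And>i. A i \<in> sets M0" and "n > 0" "\<epsilon> > 0"
  defines "P \<equiv> PiM {..<n} (\<lambda>_. M0)"
  shows "measure P {\<omega> \<in> space P. dist (real (card {i. i < n \<and> \<omega> i \<in> A i}) / real n)
      ((\<Sum>i<n. measure M0 (A i)) / real n) > \<epsilon>} \<le> 2 * exp (-2 * \<epsilon>\<^sup>2 * real n)"
proof -
  let ?X = "\<lambda>i \<omega>. indicator (A i) (\<omega> i) :: real"
  interpret P: prob_space P unfolding P_def by (rule prob_space_PiM) (rule M0)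
  have ind: "P.indep_vars (\<lambda>_. M0) (\<lambda>i \<omega>. \<omega> i) {..<n}"
    unfolding P_def by (rule indep_vars_PiM_components) (rule M0)
  have E: "P.expectation (?X i) = measure M0 (A i)" if "i < n" for i
  proof -
    have "P.expectation (?X i) = P.expectation (indicator {\<omega> \<in> space P. \<omega> i \<in> A i})"
      by (intro Bochner_Integration.integral_cong) (auto simp: indicator_def)
    also have "\<dots> = measure P ({\<omega> \<in> space P. \<omega> i \<in> A i} \<inter> space P)"
      by simp
    finally show ?thesis
      using that by (simp add: Int_absorb2 P_def measure_PiM_component M0 A)
  qed
  interpret H: Hoeffding_ineq P "{..<n}" ?X "\<lambda>_. 0" "\<lambda>_. 1" "\<Sum>i<n. P.expectation (?X i)"
  proof unfold_locales
    show "P.indep_vars (\<lambda>_. borel) ?X {..<n}"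
      using A by (intro P.indep_vars_compose2[OF ind]) auto
  qed (auto intro!: AE_I2)
  have "measure P {\<omega> \<in> space P. dist (real (card {i. i < n \<and> \<omega> i \<in> A i}) / real n)
      ((\<Sum>i<n. measure M0 (A i)) / real n) > \<epsilon>}
    \<le> measure P {\<omega> \<in> space P. \<bar>(\<Sum>i<n. ?X i \<omega>) - (\<Sum>i<n. P.expectation (?X i))\<bar> \<ge> real n * \<epsilon>}"
  proof (rule P.finite_measure_mono)
    show "{\<omega> \<in> space P. \<bar>(\<Sum>i<n. ?X i \<omega>) - (\<Sum>i<n. P.expectation (?X i))\<bar> \<ge> real n * \<epsilon>} \<in> P.events"
      using A unfolding P_def by measurable
    show "{\<omega> \<in> space P. dist (real (card {i. i < n \<and> \<omega> i \<in> A i}) / real n)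
        ((\<Sum>i<n. measure M0 (A i)) / real n) > \<epsilon>}
      \<subseteq> {\<omega> \<in> space P. \<bar>(\<Sum>i<n. ?X i \<omega>) - (\<Sum>i<n. P.expectation (?X i))\<bar> \<ge> real n * \<epsilon>}"
      using \<open>n > 0\<close>
      by (auto simp: card_eq_sum_indicator E dist_real_def diff_divide_distrib[symmetric] field_simps)
  qed
  also have "\<dots> \<le> 2 * exp (-2 * (real n * \<epsilon>)\<^sup>2 / (\<Sum>i<n. (1 - 0)\<^sup>2))"
    using \<open>\<epsilon> > 0\<close> \<open>n > 0\<close> by (intro H.Hoeffding_ineq_abs_ge) auto
  also have "\<dots> = 2 * exp (-2 * \<epsilon>\<^sup>2 * real n)"
    using \<open>n > 0\<close> by (simp add: power2_eq_square)
  finally show ?thesis .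
qed

lemma tendsto_prob_frequency:
  assumes M0: "\<And>n. prob_space (M0 n)" and A: "\<And>n i. A n i \<in> sets (M0 n)"
  shows "tendsto_prob (\<lambda>n. PiM {..<n} (\<lambda>_. M0 n))
    (\<lambda>n \<omega>. real (card {i. i < n \<and> \<omega> i \<in> A n i}) / real n)
    (\<lambda>n. (\<Sum>i<n. measure (M0 n) (A n i)) / real n)"
  unfolding tendsto_prob_def
proof (intro allI impI)
  fix \<epsilon> :: real assume "\<epsilon> > 0"
  have "(\<lambda>n. 2 * exp (-2 * \<epsilon>\<^sup>2) ^ n) \<longlonglongrightarrow> 2 * 0"
    using \<open>\<epsilon> > 0\<close> by (intro tendsto_mult tendsto_const LIMSEQ_power_zero) auto
  then have lim: "(\<lambda>n. 2 * exp (-2 * \<epsilon>\<^sup>2 * real n)) \<longlonglongrightarrow> 0"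
    by (simp add: exp_of_nat_mult[symmetric] mult.commute)
  have "\<forall>\<^sub>F n in sequentially. measure (PiM {..<n} (\<lambda>_. M0 n)) {\<omega> \<in> space (PiM {..<n} (\<lambda>_. M0 n)).
      dist (real (card {i. i < n \<and> \<omega> i \<in> A n i}) / real n) ((\<Sum>i<n. measure (M0 n) (A n i)) / real n) > \<epsilon>}
    \<le> 2 * exp (-2 * \<epsilon>\<^sup>2 * real n)"
    using eventually_gt_at_top[of 0]
    by eventually_elim (rule frequency_deviation_bound[OF M0 A _ \<open>\<epsilon> > 0\<close>])
  then show "(\<lambda>n. measure (PiM {..<n} (\<lambda>_. M0 n)) {\<omega> \<in> space (PiM {..<n} (\<lambda>_. M0 n)).
      dist (real (card {i. i < n \<and> \<omega> i \<in> A n i}) / real n) ((\<Sum>i<n. measure (M0 n) (A n i)) / real n) > \<epsilon>})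
    \<longlonglongrightarrow> 0"
    by (rule tendsto_sandwich[OF always_eventually[OF allI[OF measure_nonneg]] _ tendsto_const lim])
qed

section \<open>The hypergeometric variance\<close>

(* V_k is hypergeom_var D_k N_1k N_0k 1; keeping the correction 1 as an argument makes the function
   homogeneous of degree one, so that V_k/n is again a value of it. *)
definition hypergeom_var :: "real \<Rightarrow> real \<Rightarrow> real \<Rightarrow> real \<Rightarrow> real" where
  "hypergeom_var d x y w = d * (x + y - d) * x * y / ((x + y)\<^sup>2 * (x + y - w))"

lemma hypergeom_var_divide:
  "hypergeom_var d x y w / c = hypergeom_var (d / c) (x / c) (y / c) (w / c)"
proof (cases "c = 0")
  case False
  define num where "num = d / c * (x / c + y / c - d / c) * (x / c) * (y / c)"
  define den where "den = (x / c + y / c)\<^sup>2 * (x / c + y / c - w / c)"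
  have "d * (x + y - d) * x * y = c ^ 4 * num" "(x + y)\<^sup>2 * (x + y - w) = c ^ 3 * den"
    using False by (simp_all add: num_def den_def field_simps power2_eq_square power3_eq_cube power4_eq_xxxx)
  then have "hypergeom_var d x y w / c = (c ^ 4 * num) / (c ^ 3 * den * c)"
    by (simp add: hypergeom_var_def)
  also have "\<dots> = (c ^ 4 * num) / (c ^ 4 * den)"
    by (simp add: power3_eq_cube power4_eq_xxxx mult_ac)
  also have "\<dots> = hypergeom_var (d / c) (x / c) (y / c) (w / c)"
    using False by (simp add: hypergeom_var_def num_def den_def)
  finally show ?thesis .
qed (simp add: hypergeom_var_def)

lemma nat_mult_diff_div_pred_le:
  fixes D N :: nat
  assumes "D \<le> N" "2 \<le> N"
  shows "real D * (real N - D) / (real N - 1) \<le> D" "real D * (real N - D) / (real N - 1) \<le> real N - D"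
proof -
  have "real D * (real N - D) \<le> real D * (real N - 1) \<and> real D * (real N - D) \<le> (real N - D) * (real N - 1)"
  proof (cases "D = 0 \<or> D = N")
    case False
    then have "1 \<le> real D" "real D \<le> real N - 1" using assms(1) by auto
    then show ?thesis by (auto intro!: mult_left_mono mult_right_mono simp: mult.commute)
  qed (use assms in auto)
  then show "real D * (real N - D) / (real N - 1) \<le> D" "real D * (real N - D) / (real N - 1) \<le> real N - D"
    using assms(2) by (simp_all add: pos_divide_le_eq)
qed

lemma hypergeom_var_bounds:
  fixes D N1 N0 :: nat
  assumes "D \<le> N1 + N0"
  defines "V \<equiv> hypergeom_var D N1 N0 1"
  shows "0 \<le> V" "V \<le> D" "V \<le> real (N1 + N0) - D" "V \<le> N1" "V \<le> N0"
proof -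
  have "0 \<le> V \<and> V \<le> D \<and> V \<le> real (N1 + N0) - D \<and> V \<le> N1 \<and> V \<le> N0"
  proof (cases "N1 + N0 \<le> 1")
    case True
    then have "real N1 + real N0 = 0 \<or> real N1 + real N0 - 1 = 0"
      by (metis of_nat_add of_nat_0 of_nat_1 diff_self le_Suc_eq le_zero_eq One_nat_def)
    then have "V = 0" by (auto simp: V_def hypergeom_var_def)
    then show ?thesis using assms(1) by simp
  next
    case False
    define N where "N = N1 + N0"
    define F where "F = real D * (real N - D) / (real N - 1)"
    define S where "S = real N1 * real N0 / (real N)\<^sup>2"
    have "2 \<le> N" "0 < real N" using False by (simp_all add: N_def)
    have V: "V = F * S" by (simp add: V_def hypergeom_var_def F_def S_def N_def field_simps)
    have F: "0 \<le> F" "F \<le> D" "F \<le> real N - D"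
      using assms(1) nat_mult_diff_div_pred_le[of D N] \<open>2 \<le> N\<close> by (simp_all add: F_def N_def)
    have "real N1 * real N0 \<le> real N1 * real N" "real N1 * real N0 \<le> real N * real N0"
      by (auto simp: N_def intro!: mult_left_mono mult_right_mono)
    then have "S \<le> real N1 / real N" "S \<le> real N0 / real N"
      using \<open>0 < real N\<close> by (simp_all add: S_def field_simps power2_eq_square)
    moreover have "real N1 / real N \<le> 1" using \<open>0 < real N\<close> by (simp add: N_def)
    ultimately have S: "0 \<le> S" "S \<le> real N1 / real N" "S \<le> real N0 / real N" "S \<le> 1"
      by (auto simp: S_def)
    have "F \<le> real N" using F(2) assms(1) by (simp add: N_def)
    then have "F * S \<le> real N * (real N1 / real N)" "F * S \<le> real N * (real N0 / real N)" "F * S \<le> F"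
      using F(1) S by (intro mult_mono mult_left_le; simp)+
    then show ?thesis
      using F S \<open>0 < real N\<close> unfolding V by (simp add: N_def)
  qed
  then show "0 \<le> V" "V \<le> D" "V \<le> real (N1 + N0) - D" "V \<le> N1" "V \<le> N0" by auto
qed

lemma isCont_hypergeom_var:
  assumes "x + y \<noteq> 0" "x + y \<noteq> w"
  shows "isCont (\<lambda>(d, x, y, w). hypergeom_var d x y w) (d, x, y, w)"
  unfolding hypergeom_var_def case_prod_beta using assms by (intro continuous_intros) auto

lemma hypergeom_var_limit:
  assumes "g = g1 + g0" "g \<noteq> 0" "v \<noteq> 0"
  shows "hypergeom_var (a * g) (v * g1) (v * g0) 0 = g * (g1 / g) * (1 - g1 / g) * v * (a / v) * (1 - a / v)"
proof -
  have "g0 / g = 1 - g1 / g" "(v - a) / v = 1 - a / v"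
    using assms by (simp_all add: field_simps)
  have "v * g1 + v * g0 = v * g" using assms(1) by (simp add: algebra_simps)
  then have "hypergeom_var (a * g) (v * g1) (v * g0) 0 = a * g * (v * g - a * g) * (v * g1) * (v * g0) / ((v * g)\<^sup>2 * (v * g))"
    by (simp add: hypergeom_var_def)
  also have "\<dots> = a * (v - a) * g1 * g0 / (v * g)"
    using assms(2,3) by (simp add: field_simps power2_eq_square)
  also have "\<dots> = g * (g1 / g) * (g0 / g) * v * (a / v) * ((v - a) / v)"
    using assms(2,3) by (simp add: field_simps)
  finally show ?thesis
    using \<open>g0 / g = 1 - g1 / g\<close> \<open>(v - a) / v = 1 - a / v\<close> by simp
qed

section \<open>Counts of a censored population\<close>

lemma sum_if_const:
  fixes n :: nat
  shows "(\<Sum>i<n. if P i then c else 0) = real (card {i. i < n \<and> P i}) * (c :: real)"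
proof -
  have "(\<Sum>i<n. if P i then c else 0) = (\<Sum>i\<in>{i \<in> {..<n}. P i}. c)"
    by (rule sum.inter_filter[symmetric]) (rule finite_lessThan)
  then show ?thesis by simp
qed

definition cens :: "bool \<times> ennreal \<times> ennreal \<Rightarrow> ennreal" where
  "cens x = (if fst x then fst (snd x) else snd (snd x))"

definition at_risk_set :: "bool \<Rightarrow> real \<Rightarrow> real \<Rightarrow> (bool \<times> ennreal \<times> ennreal) set" where
  "at_risk_set z s t = {x. fst x = z \<and> ennreal t \<le> min (ennreal s) (cens x)}"

definition event_set :: "real \<Rightarrow> real \<Rightarrow> (bool \<times> ennreal \<times> ennreal) set" where
  "event_set s t = {x. ennreal s \<le> cens x \<and> min (ennreal s) (cens x) = ennreal t}"

definition Nzk :: "(nat \<Rightarrow> nat \<Rightarrow> real) \<Rightarrow> nat \<Rightarrow> nat \<Rightarrow> bool \<Rightarrow> (nat \<Rightarrow> bool \<times> ennreal \<times> ennreal) \<Rightarrow> nat" where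
  "Nzk T n k z \<omega> = card {i. i < n \<and> \<omega> i \<in> at_risk_set z (T n i) (tpt T n k)}"

lemma N1k_eq_Nzk: "N1k T n k \<omega> = Nzk T n k True \<omega>"
  by (simp add: N1k_def Nzk_def at_risk_set_def Wr_def Cr_def Zr_def cens_def)

lemma N0k_eq_Nzk: "N0k T n k \<omega> = Nzk T n k False \<omega>"
  by (simp add: N0k_def Nzk_def at_risk_set_def Wr_def Cr_def Zr_def cens_def)

lemma Dk_eq_card: "Dk T n k \<omega> = card {i. i < n \<and> \<omega> i \<in> event_set (T n i) (tpt T n k)}"
  by (simp add: Dk_def event_set_def Deltar_def Wr_def Cr_def Zr_def cens_def)

lemma Vk_eq_hypergeom_var:
  "Vk T n k \<omega> = hypergeom_var (Dk T n k \<omega>) (Nzk T n k True \<omega>) (Nzk T n k False \<omega>) 1"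
  by (simp add: Vk_def Nk_def hypergeom_var_def N1k_eq_Nzk N0k_eq_Nzk)

lemma Nk_eq_card: "Nk T n k \<omega> = card {i. i < n \<and> ennreal (tpt T n k) \<le> Wr T n \<omega> i}"
proof -
  have "{i. i < n \<and> ennreal (tpt T n k) \<le> Wr T n \<omega> i}
      = {i. i < n \<and> Zr \<omega> i \<and> ennreal (tpt T n k) \<le> Wr T n \<omega> i}
        \<union> {i. i < n \<and> \<not> Zr \<omega> i \<and> ennreal (tpt T n k) \<le> Wr T n \<omega> i}" by auto
  then show ?thesis
    by (simp add: Nk_def N1k_def N0k_def card_Un_disjoint disjoint_iff)
qed

lemma tpt_mem:
  assumes "k < Kn T n"
  shows "tpt T n k \<in> T n ` {..<n}"
  using assms unfolding tpt_def Kn_def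
  by (metis finite_imageI finite_lessThan length_sorted_list_of_set nth_mem set_sorted_list_of_set)

lemma nk_eq_sum_dk:
  assumes k: "k < Kn T n"
  shows "nk T n k = (\<Sum>j\<in>{k..<Kn T n}. dk T n j)"
proof -
  let ?L = "sorted_list_of_set (T n ` {..<n})"
  have len: "length ?L = Kn T n" unfolding Kn_def by simp
  have "{i. i < n \<and> T n i \<ge> ?L ! k} = (\<Union>j\<in>{k..<Kn T n}. {i. i < n \<and> T n i = ?L ! j})"
  proof (intro equalityI subsetI)
    fix i assume i: "i \<in> {i. i < n \<and> T n i \<ge> ?L ! k}"
    then obtain j where j: "j < Kn T n" "?L ! j = T n i"
      using len by (metis (no_types, lifting) finite_imageI finite_lessThan image_eqI in_set_conv_nth
          lessThan_iff mem_Collect_eq set_sorted_list_of_set)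
    have "k \<le> j"
    proof (rule ccontr)
      assume "\<not> k \<le> j"
      then have "?L ! j < ?L ! k"
        by (intro sorted_wrt_nth_less[OF strict_sorted_list_of_set]) (use k len in auto)
      then show False using i j by auto
    qed
    then show "i \<in> (\<Union>j\<in>{k..<Kn T n}. {i. i < n \<and> T n i = ?L ! j})"
      using i j by (auto intro!: bexI[of _ j])
  next
    fix i assume "i \<in> (\<Union>j\<in>{k..<Kn T n}. {i. i < n \<and> T n i = ?L ! j})"
    then obtain j where "k \<le> j" "j < Kn T n" "i < n" "T n i = ?L ! j" by auto
    moreover have "?L ! k \<le> ?L ! j"
      by (rule sorted_nth_mono[OF sorted_sorted_list_of_set \<open>k \<le> j\<close>]) (use \<open>j < Kn T n\<close> len in simp)
    ultimately show "i \<in> {i. i < n \<and> T n i \<ge> ?L ! k}" by simp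
  qed
  moreover have "{i. i < n \<and> T n i = ?L ! j} \<inter> {i. i < n \<and> T n i = ?L ! j'} = {}"
    if "j < Kn T n" "j' < Kn T n" "j \<noteq> j'" for j j'
    using that len nth_eq_iff_index_eq[OF distinct_sorted_list_of_set[of "T n ` {..<n}"]] by auto
  ultimately show ?thesis
    unfolding nk_def dk_def tpt_def by (simp add: card_UN_disjoint)
qed

lemma dk_le_nk: "dk T n k \<le> nk T n k"
  unfolding dk_def nk_def by (rule card_mono) auto

lemma Dk_le_Nk: "Dk T n k \<omega> \<le> Nk T n k \<omega>"
  unfolding Dk_def Nk_eq_card by (rule card_mono) (auto simp: Deltar_def Wr_def)

context
  fixes T :: "nat \<Rightarrow> nat \<Rightarrow> real" and n k :: nat
  assumes T_nonneg: "\<And>i. i < n \<Longrightarrow> 0 \<le> T n i" and t_nonneg: "0 \<le> tpt T n k"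
begin

lemma Dk_le_dk: "Dk T n k \<omega> \<le> dk T n k"
  unfolding Dk_def dk_def
  by (rule card_mono) (auto simp: Deltar_def Wr_def min_def T_nonneg t_nonneg split: if_splits)

(* A unit observed at risk at t without an event at t has event time > t. *)
lemma Nk_diff_Dk_le: "real (Nk T n k \<omega>) - Dk T n k \<omega> \<le> real (nk T n k) - dk T n k"
proof -
  define R where "R = {i. i < n \<and> ennreal (tpt T n k) \<le> Wr T n \<omega> i}"
  define E where "E = {i. i < n \<and> Deltar T n \<omega> i \<and> Wr T n \<omega> i = ennreal (tpt T n k)}"
  define G where "G = {i. i < n \<and> T n i \<ge> tpt T n k}"
  define Q where "Q = {i. i < n \<and> T n i = tpt T n k}"
  have "E \<subseteq> R" "Q \<subseteq> G" by (auto simp: E_def R_def Q_def G_def)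
  have "R - E \<subseteq> G - Q"
  proof
    fix i assume "i \<in> R - E"
    then have i: "i < n" "ennreal (tpt T n k) \<le> ennreal (T n i)" "ennreal (tpt T n k) \<le> Cr \<omega> i"
      and not_E: "\<not> (ennreal (T n i) \<le> Cr \<omega> i \<and> min (ennreal (T n i)) (Cr \<omega> i) = ennreal (tpt T n k))"
      by (auto simp: R_def E_def Wr_def Deltar_def)
    have "tpt T n k \<le> T n i" using i T_nonneg by simp
    moreover have "T n i \<noteq> tpt T n k" using not_E i(3) by auto
    ultimately show "i \<in> G - Q" using i(1) by (simp add: G_def Q_def)
  qed
  then have "card (R - E) \<le> card (G - Q)" by (intro card_mono) (auto simp: G_def)
  then show ?thesis
    using \<open>E \<subseteq> R\<close> \<open>Q \<subseteq> G\<close> card_mono[OF _ \<open>E \<subseteq> R\<close>] card_mono[OF _ \<open>Q \<subseteq> G\<close>]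
    by (simp add: card_Diff_subset R_def E_def G_def Q_def Nk_eq_card Dk_def nk_def dk_def finite_subset of_nat_diff)
qed

end

lemma Dk_le_n: "Dk T n k \<omega> \<le> n"
  unfolding Dk_def using card_mono[of "{..<n}"] by (simp add: subset_eq)

lemma Vk_bounds:
  "0 \<le> Vk T n k \<omega>" "Vk T n k \<omega> \<le> Dk T n k \<omega>" "Vk T n k \<omega> \<le> real (Nk T n k \<omega>) - Dk T n k \<omega>"
  "Vk T n k \<omega> \<le> Nzk T n k z \<omega>"
proof -
  have "Dk T n k \<omega> \<le> Nzk T n k True \<omega> + Nzk T n k False \<omega>"
    using Dk_le_Nk by (simp add: Nk_def N1k_eq_Nzk N0k_eq_Nzk)
  note b = hypergeom_var_bounds[OF this, folded Vk_eq_hypergeom_var]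
  show "0 \<le> Vk T n k \<omega>" "Vk T n k \<omega> \<le> Dk T n k \<omega>" "Vk T n k \<omega> \<le> real (Nk T n k \<omega>) - Dk T n k \<omega>"
    using b by (simp_all add: Nk_def N1k_eq_Nzk N0k_eq_Nzk)
  show "Vk T n k \<omega> \<le> Nzk T n k z \<omega>" using b by (cases z) auto
qed

lemma Vk_div_eq_hypergeom_var:
  "Vk T n k \<omega> / real n = hypergeom_var (Dk T n k \<omega> / real n)
    (Nzk T n k True \<omega> / real n) (Nzk T n k False \<omega> / real n) (1 / real n)"
  by (simp add: Vk_eq_hypergeom_var hypergeom_var_divide)

lemma Vk_div_bounds: "0 \<le> Vk T n k \<omega> / real n" "Vk T n k \<omega> / real n \<le> 1"
proof -
  have "Vk T n k \<omega> \<le> real n" using Vk_bounds(2)[of T n k \<omega>] Dk_le_n[of T n k \<omega>] by linarith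
  then show "Vk T n k \<omega> / real n \<le> 1" by (cases "n = 0") auto
qed (simp add: Vk_bounds)

lemma abs_Vk_div_le_1: "\<bar>Vk T n k \<omega> / real n\<bar> \<le> 1"
  using Vk_div_bounds[of T n k \<omega>] by simp

section \<open>The randomised population\<close>

locale censored_trial =
  fixes p :: "nat \<Rightarrow> real"
    and T :: "nat \<Rightarrow> nat \<Rightarrow> real"
    and Cd :: "nat \<Rightarrow> (ennreal \<times> ennreal) measure"
  assumes p_range: "\<And>n. 0 < p n \<and> p n < 1"
    and Cd_prob: "\<And>n. prob_space (Cd n)"
    and Cd_sets: "\<And>n. sets (Cd n) = sets (borel \<Otimes>\<^sub>M borel)"
    and T_nonneg: "\<And>n i. i < n \<Longrightarrow> 0 \<le> T n i"
begin

definition unitM :: "nat \<Rightarrow> (bool \<times> ennreal \<times> ennreal) measure" where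
  "unitM n = measure_pmf (bernoulli_pmf (p n)) \<Otimes>\<^sub>M Cd n"

definition arm_prob :: "nat \<Rightarrow> bool \<Rightarrow> real" where
  "arm_prob n z = (if z then p n else 1 - p n)"

lemma popM_eq: "popM p Cd n = PiM {..<n} (\<lambda>_. unitM n)"
  by (simp add: popM_def unitM_def)

lemma prob_space_unitM: "prob_space (unitM n)"
  unfolding unitM_def by (intro prob_space_pair measure_pmf.prob_space_axioms Cd_prob)

lemma prob_space_popM: "prob_space (popM p Cd n)"
  unfolding popM_eq by (intro prob_space_PiM prob_space_unitM)

lemma sets_unitM: "sets (unitM n) = sets (count_space UNIV \<Otimes>\<^sub>M (borel \<Otimes>\<^sub>M borel))"
  unfolding unitM_def by (rule sets_pair_measure_cong) (simp_all add: Cd_sets)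

lemma space_Cd: "space (Cd n) = UNIV"
  using sets_eq_imp_space_eq[OF Cd_sets] by (simp add: space_pair_measure)

lemma Collect_in_sets_unitM:
  assumes "Measurable.pred (count_space UNIV \<Otimes>\<^sub>M (borel \<Otimes>\<^sub>M borel)) P"
  shows "{x. P x} \<in> sets (unitM n)"
  using assms unfolding pred_def sets_unitM by (simp add: space_pair_measure)

lemma arm_censored_after_sets: "{x. fst x = z \<and> ennreal t \<le> cens x} \<in> sets (unitM n)"
  unfolding cens_def by (intro Collect_in_sets_unitM) measurable

lemma measure_arm_censored_after:
  "measure (unitM n) {x. fst x = z \<and> ennreal t \<le> cens x} = arm_prob n z * Gz Cd n z t"
proof -
  interpret C: prob_space "Cd n" by (rule Cd_prob)
  define B where "B = {c \<in> space (Cd n). ennreal t \<le> (if z then fst c else snd c)}"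
  have B: "B \<in> sets (Cd n)"
    unfolding B_def Cd_sets sets_eq_imp_space_eq[OF Cd_sets] by measurable
  have "{x. fst x = z \<and> ennreal t \<le> cens x} = {z} \<times> B"
    by (auto simp: B_def cens_def space_Cd)
  moreover have "emeasure (unitM n) ({z} \<times> B) = emeasure (measure_pmf (bernoulli_pmf (p n))) {z} * emeasure (Cd n) B"
    unfolding unitM_def by (rule C.emeasure_pair_measure_Times) (auto simp: B)
  moreover have "\<dots> = ennreal (arm_prob n z * Gz Cd n z t)"
    using p_range[of n]
    by (cases z) (auto simp: arm_prob_def Gz_def B_def C.emeasure_eq_measure measure_pmf.emeasure_eq_measure
        measure_pmf_single ennreal_mult)
  ultimately show ?thesis
    using p_range[of n] by (simp add: measure_def arm_prob_def Gz_def)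
qed

lemma at_risk_set_sets: "at_risk_set z s t \<in> sets (unitM n)"
  unfolding at_risk_set_def cens_def by (intro Collect_in_sets_unitM) measurable

lemma event_set_sets: "event_set s t \<in> sets (unitM n)"
  unfolding event_set_def cens_def by (intro Collect_in_sets_unitM) measurable

lemma measure_at_risk_set:
  assumes "0 \<le> s" "0 \<le> t"
  shows "measure (unitM n) (at_risk_set z s t) = (if t \<le> s then arm_prob n z * Gz Cd n z t else 0)"
proof -
  have "at_risk_set z s t = (if t \<le> s then {x. fst x = z \<and> ennreal t \<le> cens x} else {})"
    using assms by (auto simp: at_risk_set_def)
  then show ?thesis by (simp add: measure_arm_censored_after)
qed

lemma measure_event_set:
  assumes "0 \<le> s" "0 \<le> t"
  shows "measure (unitM n) (event_set s t) = (if s = t then Gmix p Cd n t else 0)"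
proof -
  interpret U: prob_space "unitM n" by (rule prob_space_unitM)
  define Arm where "Arm z = {x. fst x = z \<and> ennreal t \<le> cens x}" for z
  have "event_set s t = (if s = t then Arm True \<union> Arm False else {})"
    using assms by (auto simp: event_set_def Arm_def min_def)
  moreover have "measure (unitM n) (Arm True \<union> Arm False) = measure (unitM n) (Arm True) + measure (unitM n) (Arm False)"
    using arm_censored_after_sets[of True t n] arm_censored_after_sets[of False t n]
    unfolding Arm_def by (intro U.finite_measure_Union) auto
  moreover have "measure (unitM n) (Arm z) = arm_prob n z * Gz Cd n z t" for z
    unfolding Arm_def by (rule measure_arm_censored_after)
  ultimately show ?thesis
    by (simp add: Gmix_def arm_prob_def)
qed

lemma tpt_nonneg:
  assumes "k < Kn T n"
  shows "0 \<le> tpt T n k"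
proof -
  obtain i where "i < n" "tpt T n k = T n i" using tpt_mem[OF assms] by blast
  then show ?thesis using T_nonneg by simp
qed

lemma sum_measure_event_set:
  assumes "k < Kn T n"
  shows "(\<Sum>i<n. measure (unitM n) (event_set (T n i) (tpt T n k))) = real (dk T n k) * gk p Cd T n k"
proof -
  have "(\<Sum>i<n. measure (unitM n) (event_set (T n i) (tpt T n k)))
      = (\<Sum>i<n. if T n i = tpt T n k then gk p Cd T n k else 0)"
    by (intro sum.cong refl) (simp add: measure_event_set T_nonneg tpt_nonneg[OF assms] gk_def)
  then show ?thesis by (simp add: sum_if_const dk_def)
qed

lemma sum_measure_at_risk_set:
  assumes "k < Kn T n"
  shows "(\<Sum>i<n. measure (unitM n) (at_risk_set z (T n i) (tpt T n k)))
    = real (nk T n k) * (arm_prob n z * Gz Cd n z (tpt T n k))"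
proof -
  have "(\<Sum>i<n. measure (unitM n) (at_risk_set z (T n i) (tpt T n k)))
      = (\<Sum>i<n. if tpt T n k \<le> T n i then arm_prob n z * Gz Cd n z (tpt T n k) else 0)"
    by (intro sum.cong refl) (simp add: measure_at_risk_set T_nonneg tpt_nonneg[OF assms])
  then show ?thesis by (simp add: sum_if_const nk_def)
qed

lemma Dk_measurable [measurable]: "(\<lambda>\<omega>. real (Dk T n k \<omega>)) \<in> borel_measurable (popM p Cd n)"
  unfolding popM_eq Dk_eq_card by (rule borel_measurable_card_PiM[OF event_set_sets])

lemma Nzk_measurable [measurable]: "(\<lambda>\<omega>. real (Nzk T n k z \<omega>)) \<in> borel_measurable (popM p Cd n)"
  unfolding popM_eq Nzk_def by (rule borel_measurable_card_PiM[OF at_risk_set_sets])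

lemma Vk_measurable [measurable]: "Vk T n k \<in> borel_measurable (popM p Cd n)"
  unfolding Vk_eq_hypergeom_var[abs_def] hypergeom_var_def by measurable

lemma Vk_div_measurable: "(\<lambda>\<omega>. Vk T n k \<omega> / real n) \<in> borel_measurable (popM p Cd n)"
  by measurable

lemma tendsto_prob_count:
  assumes A: "\<And>n i. A n i \<in> sets (unitM n)"
    and mean: "\<forall>\<^sub>F n in sequentially. (\<Sum>i<n. measure (unitM n) (A n i)) / real n = m n"
  shows "tendsto_prob (popM p Cd) (\<lambda>n \<omega>. real (card {i. i < n \<and> \<omega> i \<in> A n i}) / real n) m"
proof (rule tendsto_prob_shift[OF prob_space_popM])
  show "tendsto_prob (popM p Cd) (\<lambda>n \<omega>. real (card {i. i < n \<and> \<omega> i \<in> A n i}) / real n)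
      (\<lambda>n. (\<Sum>i<n. measure (unitM n) (A n i)) / real n)"
    unfolding popM_eq[abs_def] by (rule tendsto_prob_frequency[OF prob_space_unitM A])
  show "(\<lambda>\<omega>. real (card {i. i < n \<and> \<omega> i \<in> A n i}) / real n) \<in> borel_measurable (popM p Cd n)" for n
    unfolding popM_eq by (intro borel_measurable_divide borel_measurable_card_PiM A borel_measurable_const)
  from mean have "\<forall>\<^sub>F n in sequentially. dist ((\<Sum>i<n. measure (unitM n) (A n i)) / real n) (m n) = 0"
    by eventually_elim simp
  then show "(\<lambda>n. dist ((\<Sum>i<n. measure (unitM n) (A n i)) / real n) (m n)) \<longlonglongrightarrow> 0"
    by (rule tendsto_eventually)
qed

lemma tendsto_prob_Dk:
  assumes "\<forall>\<^sub>F n in sequentially. k < Kn T n"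
  shows "tendsto_prob (popM p Cd) (\<lambda>n \<omega>. real (Dk T n k \<omega>) / real n)
    (\<lambda>n. real (dk T n k) / real n * gk p Cd T n k)"
  unfolding Dk_eq_card using assms
  by (intro tendsto_prob_count[OF event_set_sets]) (elim eventually_mono, simp add: sum_measure_event_set)

lemma tendsto_prob_Nzk:
  assumes "\<forall>\<^sub>F n in sequentially. k < Kn T n"
  shows "tendsto_prob (popM p Cd) (\<lambda>n \<omega>. real (Nzk T n k z \<omega>) / real n)
    (\<lambda>n. real (nk T n k) / real n * (arm_prob n z * Gz Cd n z (tpt T n k)))"
  unfolding Nzk_def using assms
  by (intro tendsto_prob_count[OF at_risk_set_sets]) (elim eventually_mono, simp add: sum_measure_at_risk_set)

end

section \<open>Asymptotics at a fixed event time\<close>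

locale censored_trial_limits = censored_trial +
  fixes P :: real and K k :: nat
  assumes p_lim: "p \<longlonglongrightarrow> P"
    and K_fixed: "\<forall>\<^sub>F n in sequentially. Kn T n = K"
    and k_less: "k < K"
    and d_lim: "\<And>j. j < K \<Longrightarrow> convergent (\<lambda>n. real (dk T n j) / real n)"
    and G_lim: "\<And>z. convergent (\<lambda>n. Gz Cd n z (tpt T n k))"
begin

definition dlim :: real where "dlim = lim (\<lambda>n. real (dk T n k) / real n)"
definition nlim :: real where "nlim = (\<Sum>j\<in>{k..<K}. lim (\<lambda>n. real (dk T n j) / real n))"
definition Glim :: "bool \<Rightarrow> real" where "Glim z = lim (\<lambda>n. Gz Cd n z (tpt T n k))"
definition glim :: real where "glim = P * Glim True + (1 - P) * Glim False"

lemma eventually_k_less_Kn: "\<forall>\<^sub>F n in sequentially. k < Kn T n"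
  using K_fixed by eventually_elim (use k_less in simp)

lemma dk_tendsto: "(\<lambda>n. real (dk T n k) / real n) \<longlonglongrightarrow> dlim"
  using d_lim[OF k_less] unfolding dlim_def by (simp add: convergent_LIMSEQ_iff)

lemma Gz_tendsto: "(\<lambda>n. Gz Cd n z (tpt T n k)) \<longlonglongrightarrow> Glim z"
  using G_lim unfolding Glim_def by (simp add: convergent_LIMSEQ_iff)

lemma nk_tendsto: "(\<lambda>n. real (nk T n k) / real n) \<longlonglongrightarrow> nlim"
proof -
  have "(\<lambda>n. \<Sum>j\<in>{k..<K}. real (dk T n j) / real n) \<longlonglongrightarrow> nlim"
    unfolding nlim_def using d_lim by (intro tendsto_sum) (simp add: convergent_LIMSEQ_iff)
  moreover have "\<forall>\<^sub>F n in sequentially. (\<Sum>j\<in>{k..<K}. real (dk T n j) / real n) = real (nk T n k) / real n"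
    using K_fixed by eventually_elim (simp add: nk_eq_sum_dk k_less sum_divide_distrib)
  ultimately show ?thesis by (rule Lim_transform_eventually)
qed

lemma dlim_nonneg: "0 \<le> dlim"
  by (rule LIMSEQ_le_const[OF dk_tendsto]) simp

lemma Glim_nonneg: "0 \<le> Glim z"
  by (rule LIMSEQ_le_const[OF Gz_tendsto]) (simp add: Gz_def)

lemma dlim_le_nlim: "dlim \<le> nlim"
  using dk_tendsto nk_tendsto by (rule LIMSEQ_le) (auto intro!: exI divide_right_mono dk_le_nk)

lemma hk_tendsto:
  assumes "0 < dlim"
  shows "(\<lambda>n. hk T n k) \<longlonglongrightarrow> dlim / nlim"
proof -
  have "(\<lambda>n. (real (dk T n k) / real n) / (real (nk T n k) / real n)) \<longlonglongrightarrow> dlim / nlim"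
    using assms dlim_le_nlim by (intro tendsto_divide dk_tendsto nk_tendsto) auto
  moreover have "\<forall>\<^sub>F n in sequentially. (real (dk T n k) / real n) / (real (nk T n k) / real n) = hk T n k"
    using eventually_gt_at_top[of 0] by eventually_elim (simp add: hk_def)
  ultimately show ?thesis by (rule Lim_transform_eventually)
qed

lemma arm_prob_tendsto: "(\<lambda>n. arm_prob n z) \<longlonglongrightarrow> (if z then P else 1 - P)"
  unfolding arm_prob_def by (cases z) (auto intro: tendsto_intros p_lim)

lemma P_bounds: "0 \<le> P" "P \<le> 1"
proof -
  have "0 \<le> p n" "p n \<le> 1" for n using p_range[of n] by auto
  then show "0 \<le> P" "P \<le> 1" by (auto intro: LIMSEQ_le_const[OF p_lim] LIMSEQ_le_const2[OF p_lim])
qed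

lemma gk_tendsto: "(\<lambda>n. gk p Cd T n k) \<longlonglongrightarrow> glim"
  unfolding gk_def Gmix_def glim_def by (intro tendsto_intros p_lim Gz_tendsto)

definition counts_limit :: "real \<times> real \<times> real \<times> real" where
  "counts_limit = (dlim * glim,
    nlim * (P * Glim True), nlim * ((1 - P) * Glim False), 0)"

lemma counts_tendsto_prob:
  "tendsto_prob (popM p Cd) (\<lambda>n \<omega>. (real (Dk T n k \<omega>) / real n, real (Nzk T n k True \<omega>) / real n,
      real (Nzk T n k False \<omega>) / real n, 1 / real n)) (\<lambda>_. counts_limit)"
proof -
  note prob = prob_space_popM
  define c where "c z n = real (nk T n k) / real n * (arm_prob n z * Gz Cd n z (tpt T n k))" for z n
  have N: "tendsto_prob (popM p Cd) (\<lambda>n \<omega>. real (Nzk T n k z \<omega>) / real n) (c z)" for z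
    unfolding c_def by (rule tendsto_prob_Nzk[OF eventually_k_less_Kn])
  have W: "tendsto_prob (popM p Cd) (\<lambda>n \<omega>. 1 / real n) (\<lambda>_. 0)"
    by (rule tendsto_prob_const[OF lim_const_over_n])
  have X3: "tendsto_prob (popM p Cd) (\<lambda>n \<omega>. (real (Nzk T n k False \<omega>) / real n, 1 / real n))
      (\<lambda>n. (c False n, 0))"
    by (rule tendsto_prob_Pair[OF prob N _ W]; measurable)
  have X2: "tendsto_prob (popM p Cd)
      (\<lambda>n \<omega>. (real (Nzk T n k True \<omega>) / real n, real (Nzk T n k False \<omega>) / real n, 1 / real n))
      (\<lambda>n. (c True n, c False n, 0))"
    by (rule tendsto_prob_Pair[OF prob N _ X3]; measurable)
  have X: "tendsto_prob (popM p Cd) (\<lambda>n \<omega>. (real (Dk T n k \<omega>) / real n, real (Nzk T n k True \<omega>) / real n,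
        real (Nzk T n k False \<omega>) / real n, 1 / real n))
      (\<lambda>n. (real (dk T n k) / real n * gk p Cd T n k, c True n, c False n, 0))"
    by (rule tendsto_prob_Pair[OF prob tendsto_prob_Dk[OF eventually_k_less_Kn] _ X2]; measurable)
  have c: "c z \<longlonglongrightarrow> nlim * ((if z then P else 1 - P) * Glim z)" for z
    unfolding c_def by (intro tendsto_mult nk_tendsto arm_prob_tendsto Gz_tendsto)
  have "(\<lambda>n. (real (dk T n k) / real n * gk p Cd T n k, c True n, c False n, 0)) \<longlonglongrightarrow> counts_limit"
    unfolding counts_limit_def using c[of True] c[of False]
    by (intro tendsto_Pair tendsto_mult dk_tendsto gk_tendsto tendsto_const) simp_all
  then have "(\<lambda>n. dist (real (dk T n k) / real n * gk p Cd T n k, c True n, c False n, 0) counts_limit) \<longlonglongrightarrow> 0"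
    by (rule tendsto_dist_iff[THEN iffD1])
  from tendsto_prob_shift[OF prob X _ this] show ?thesis by measurable
qed

definition Vk_centre :: "nat \<Rightarrow> real" where
  "Vk_centre n = gk p Cd T n k * phik p Cd T n k * (1 - phik p Cd T n k)
    * (real (nk T n k) / real n) * hk T n k * (1 - hk T n k)"

definition Vk_limit :: real where
  "Vk_limit = (case counts_limit of (d, x, y, w) \<Rightarrow> hypergeom_var d x y w)"

context
  assumes dlim_pos: "0 < dlim" and glim_pos: "0 < glim"
begin

lemma nlim_pos: "0 < nlim"
  using dlim_pos dlim_le_nlim by linarith

lemma Vk_centre_tendsto: "Vk_centre \<longlonglongrightarrow> Vk_limit"
proof -
  have phik: "(\<lambda>n. phik p Cd T n k) \<longlonglongrightarrow> P * Glim True / glim"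
    unfolding phik_def using gk_tendsto glim_pos
    by (intro tendsto_divide tendsto_mult p_lim Gz_tendsto) (auto simp: gk_def)
  have "Vk_centre \<longlonglongrightarrow> glim * (P * Glim True / glim) * (1 - P * Glim True / glim)
      * nlim * (dlim / nlim) * (1 - dlim / nlim)"
    unfolding Vk_centre_def[abs_def]
    by (intro tendsto_mult tendsto_diff tendsto_const gk_tendsto phik nk_tendsto hk_tendsto dlim_pos)
  also have "glim * (P * Glim True / glim) * (1 - P * Glim True / glim) * nlim * (dlim / nlim) * (1 - dlim / nlim)
      = Vk_limit"
    unfolding Vk_limit_def counts_limit_def prod.case using nlim_pos glim_pos
    by (intro hypergeom_var_limit[symmetric]) (simp_all add: glim_def)
  finally show ?thesis .
qed

lemma Vk_tendsto_prob_regular: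
  "tendsto_prob (popM p Cd) (\<lambda>n \<omega>. Vk T n k \<omega> / real n) (\<lambda>_. Vk_limit)"
proof -
  define g :: "real \<times> real \<times> real \<times> real \<Rightarrow> real" where "g = (\<lambda>(d, x, y, w). hypergeom_var d x y w)"
  have "nlim * (P * Glim True) + nlim * ((1 - P) * Glim False) = nlim * glim"
    by (simp add: glim_def algebra_simps)
  then have "isCont g counts_limit"
    unfolding g_def counts_limit_def using nlim_pos glim_pos by (intro isCont_hypergeom_var) auto
  from tendsto_prob_continuous_map[OF prob_space_popM counts_tendsto_prob _ tendsto_const this]
  have "tendsto_prob (popM p Cd) (\<lambda>n \<omega>. g (real (Dk T n k \<omega>) / real n,
      real (Nzk T n k True \<omega>) / real n, real (Nzk T n k False \<omega>) / real n, 1 / real n)) (\<lambda>_. g counts_limit)"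
    by measurable
  then show ?thesis
    by (simp add: g_def counts_limit_def Vk_limit_def Vk_div_eq_hypergeom_var)
qed

lemma Vk_asymptotics_regular:
  "(\<lambda>n. prob_space.expectation (popM p Cd n) (Vk T n k) / real n - Vk_centre n) \<longlonglongrightarrow> 0"
  "tendsto_prob (popM p Cd) (\<lambda>n \<omega>. Vk T n k \<omega> / real n)
     (\<lambda>n. prob_space.expectation (popM p Cd n) (Vk T n k) / real n)"
  using tendsto_diff[OF expectation_tendsto[OF prob_space_popM Vk_div_measurable abs_Vk_div_le_1
      Vk_tendsto_prob_regular] Vk_centre_tendsto]
    tendsto_prob_expectation[OF prob_space_popM Vk_div_measurable abs_Vk_div_le_1 Vk_tendsto_prob_regular]
  by simp_all

end

lemma Vk_tendsto_prob_0_if_dlim_0: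
  assumes "dlim = 0"
  shows "tendsto_prob (popM p Cd) (\<lambda>n \<omega>. Vk T n k \<omega> / real n) (\<lambda>_. 0)"
proof -
  have X: "tendsto_prob (popM p Cd) (\<lambda>n _. real (dk T n k) / real n) (\<lambda>_. 0)"
    using dk_tendsto unfolding assms by (rule tendsto_prob_const)
  from eventually_k_less_Kn have "\<forall>\<^sub>F n in sequentially. \<forall>\<omega>\<in>space (popM p Cd n).
      0 \<le> Vk T n k \<omega> / real n \<and> Vk T n k \<omega> / real n \<le> real (dk T n k) / real n"
  proof eventually_elim
    case (elim n)
    have "Vk T n k \<omega> \<le> real (dk T n k)" for \<omega>
      using Vk_bounds(2)[of T n k \<omega>] Dk_le_dk[OF T_nonneg tpt_nonneg[OF elim], of \<omega>] by linarith
    then show ?case by (simp add: Vk_div_bounds divide_right_mono)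
  qed
  from tendsto_prob_dominated[OF prob_space_popM X borel_measurable_const this] show ?thesis .
qed

lemma Vk_tendsto_prob_0_if_Glim_0:
  assumes "Glim z = 0"
  shows "tendsto_prob (popM p Cd) (\<lambda>n \<omega>. Vk T n k \<omega> / real n) (\<lambda>_. 0)"
proof -
  let ?c = "\<lambda>n. real (nk T n k) / real n * (arm_prob n z * Gz Cd n z (tpt T n k))"
  have "?c \<longlonglongrightarrow> nlim * ((if z then P else 1 - P) * Glim z)"
    by (intro tendsto_mult nk_tendsto arm_prob_tendsto Gz_tendsto)
  then have "?c \<longlonglongrightarrow> 0" unfolding assms by simp
  then have "(\<lambda>n. dist (?c n) 0) \<longlonglongrightarrow> 0" by (rule tendsto_dist_iff[THEN iffD1])
  moreover have "(\<lambda>\<omega>. real (Nzk T n k z \<omega>) / real n) \<in> borel_measurable (popM p Cd n)" for n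
    by measurable
  ultimately have X: "tendsto_prob (popM p Cd) (\<lambda>n \<omega>. real (Nzk T n k z \<omega>) / real n) (\<lambda>_. 0)"
    by (intro tendsto_prob_shift[OF prob_space_popM tendsto_prob_Nzk[OF eventually_k_less_Kn]])
  have "\<forall>\<^sub>F n in sequentially. \<forall>\<omega>\<in>space (popM p Cd n).
      0 \<le> Vk T n k \<omega> / real n \<and> Vk T n k \<omega> / real n \<le> real (Nzk T n k z \<omega>) / real n"
    by (simp add: Vk_div_bounds Vk_bounds(4) divide_right_mono)
  from tendsto_prob_dominated[OF prob_space_popM X _ this] show ?thesis by measurable
qed

lemma Vk_tendsto_prob_0_if_dlim_eq_nlim:
  assumes "dlim = nlim"
  shows "tendsto_prob (popM p Cd) (\<lambda>n \<omega>. Vk T n k \<omega> / real n) (\<lambda>_. 0)"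
proof -
  have "(\<lambda>n. real (nk T n k) / real n - real (dk T n k) / real n) \<longlonglongrightarrow> nlim - dlim"
    by (intro tendsto_diff nk_tendsto dk_tendsto)
  then have X: "tendsto_prob (popM p Cd) (\<lambda>n _. real (nk T n k) / real n - real (dk T n k) / real n) (\<lambda>_. 0)"
    unfolding assms by (simp add: tendsto_prob_const)
  from eventually_k_less_Kn have "\<forall>\<^sub>F n in sequentially. \<forall>\<omega>\<in>space (popM p Cd n).
      0 \<le> Vk T n k \<omega> / real n \<and> Vk T n k \<omega> / real n \<le> real (nk T n k) / real n - real (dk T n k) / real n"
  proof eventually_elim
    case (elim n)
    have "Vk T n k \<omega> \<le> real (nk T n k) - real (dk T n k)" for \<omega>
      using Vk_bounds(3)[of T n k \<omega>] Nk_diff_Dk_le[OF T_nonneg tpt_nonneg[OF elim], of \<omega>] by linarith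
    then show ?case by (simp add: Vk_div_bounds diff_divide_distrib[symmetric] divide_right_mono)
  qed
  from tendsto_prob_dominated[OF prob_space_popM X borel_measurable_const this] show ?thesis .
qed

lemma Vk_asymptotics_degenerate:
  assumes "\<not> (0 < dlim \<and> 0 < Glim True \<and> 0 < Glim False \<and> dlim < nlim)"
  shows "(\<lambda>n. prob_space.expectation (popM p Cd n) (Vk T n k) / real n) \<longlonglongrightarrow> 0"
    "tendsto_prob (popM p Cd) (\<lambda>n \<omega>. Vk T n k \<omega> / real n) (\<lambda>_. 0)"
proof -
  have "dlim = 0 \<or> Glim True = 0 \<or> Glim False = 0 \<or> dlim = nlim"
    using assms dlim_nonneg Glim_nonneg[of True] Glim_nonneg[of False] dlim_le_nlim by linarith
  then show V: "tendsto_prob (popM p Cd) (\<lambda>n \<omega>. Vk T n k \<omega> / real n) (\<lambda>_. 0)"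
    using Vk_tendsto_prob_0_if_dlim_0 Vk_tendsto_prob_0_if_Glim_0 Vk_tendsto_prob_0_if_dlim_eq_nlim by blast
  show "(\<lambda>n. prob_space.expectation (popM p Cd n) (Vk T n k) / real n) \<longlonglongrightarrow> 0"
    using expectation_tendsto[OF prob_space_popM Vk_div_measurable abs_Vk_div_le_1 V] by simp
qed

lemma regular_iff:
  "(lim (\<lambda>n. real (dk T n k) / real n) > 0 \<and> lim (\<lambda>n. Gz Cd n True (tpt T n k)) > 0
      \<and> lim (\<lambda>n. Gz Cd n False (tpt T n k)) > 0 \<and> (\<exists>l. (\<lambda>n. hk T n k) \<longlonglongrightarrow> l \<and> l < 1))
    \<longleftrightarrow> (0 < dlim \<and> 0 < Glim True \<and> 0 < Glim False \<and> dlim < nlim)"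
proof (cases "0 < dlim")
  case True
  then have "0 < nlim" using dlim_le_nlim by linarith
  have "(\<exists>l. (\<lambda>n. hk T n k) \<longlonglongrightarrow> l \<and> l < 1) \<longleftrightarrow> dlim / nlim < 1"
    using hk_tendsto[OF True] by (auto dest: LIMSEQ_unique)
  also have "\<dots> \<longleftrightarrow> dlim < nlim" using \<open>0 < nlim\<close> by (simp add: divide_less_eq)
  finally show ?thesis by (simp add: dlim_def Glim_def)
qed (simp add: dlim_def)

lemma glim_pos_if_Glim_pos:
  assumes "0 < Glim True" "0 < Glim False"
  shows "0 < glim"
  unfolding glim_def
proof (cases "P = 0")
  case False
  then have "0 < P * Glim True" using P_bounds assms by simp
  moreover have "0 \<le> (1 - P) * Glim False" using P_bounds assms by simp
  ultimately show "0 < P * Glim True + (1 - P) * Glim False" by linarith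
qed (simp add: assms)

end

theorem lemmaA15:
  fixes p :: "nat \<Rightarrow> real"
    and T :: "nat \<Rightarrow> nat \<Rightarrow> real"
    and Cd :: "nat \<Rightarrow> (ennreal \<times> ennreal) measure"
    and K :: nat
  assumes p_range: "\<And>n. 0 < p n \<and> p n < 1"
    and Cd_prob: "\<And>n. prob_space (Cd n)"
    and Cd_sets: "\<And>n. sets (Cd n) = sets (borel \<Otimes>\<^sub>M borel)"
    and T_nonneg: "\<And>n i. i < n \<Longrightarrow> 0 \<le> T n i"
    and K_fixed: "\<forall>\<^sub>F n in sequentially. Kn T n = K"
    and p_lim: "\<exists>l. p \<longlonglongrightarrow> l \<and> 0 < l \<and> l < 1"
    and d_lim: "\<And>k. k < K \<Longrightarrow> convergent (\<lambda>n. real (dk T n k) / real n)"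
    and G1_lim: "\<And>k. k < K \<Longrightarrow> convergent (\<lambda>n. Gz Cd n True (tpt T n k))"
    and G0_lim: "\<And>k. k < K \<Longrightarrow> convergent (\<lambda>n. Gz Cd n False (tpt T n k))"
    and some_k: "\<exists>k<K. lim (\<lambda>n. real (dk T n k) / real n) > 0
                      \<and> lim (\<lambda>n. Gz Cd n True (tpt T n k)) > 0
                      \<and> lim (\<lambda>n. Gz Cd n False (tpt T n k)) > 0
                      \<and> (\<exists>l. (\<lambda>n. hk T n k) \<longlonglongrightarrow> l \<and> l < 1)"
  shows "\<forall>k<K.
    (if lim (\<lambda>n. real (dk T n k) / real n) > 0
        \<and> lim (\<lambda>n. Gz Cd n True (tpt T n k)) > 0
        \<and> lim (\<lambda>n. Gz Cd n False (tpt T n k)) > 0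
        \<and> (\<exists>l. (\<lambda>n. hk T n k) \<longlonglongrightarrow> l \<and> l < 1)
     then
       (\<lambda>n. prob_space.expectation (popM p Cd n) (Vk T n k) / real n
            - gk p Cd T n k * phik p Cd T n k * (1 - phik p Cd T n k)
              * (real (nk T n k) / real n) * hk T n k * (1 - hk T n k)) \<longlonglongrightarrow> 0
       \<and> (\<forall>\<epsilon>>0. (\<lambda>n. measure (popM p Cd n)
              {\<omega> \<in> space (popM p Cd n).
                 \<bar>Vk T n k \<omega> / real n
                  - prob_space.expectation (popM p Cd n) (Vk T n k) / real n\<bar> > \<epsilon>})
            \<longlonglongrightarrow> 0)
     else
       (\<lambda>n. prob_space.expectation (popM p Cd n) (Vk T n k) / real n) \<longlonglongrightarrow> 0
       \<and> (\<forall>\<epsilon>>0. (\<lambda>n. measure (popM p Cd n)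
              {\<omega> \<in> space (popM p Cd n). \<bar>Vk T n k \<omega> / real n\<bar> > \<epsilon>})
            \<longlonglongrightarrow> 0))"
proof (intro allI impI, goal_cases)
  case (1 k)
  obtain P where "p \<longlonglongrightarrow> P" using p_lim by blast
  have G_lim: "convergent (\<lambda>n. Gz Cd n z (tpt T n k))" for z
    using G1_lim G0_lim \<open>k < K\<close> by (cases z) auto
  interpret censored_trial_limits p T Cd P K k
    by (intro censored_trial_limits.intro censored_trial.intro censored_trial_limits_axioms.intro
        p_range Cd_prob Cd_sets T_nonneg \<open>p \<longlonglongrightarrow> P\<close> K_fixed \<open>k < K\<close> d_lim G_lim)
  show ?case
  proof (cases "0 < dlim \<and> 0 < Glim True \<and> 0 < Glim False \<and> dlim < nlim")
    case True
    then have "0 < glim" by (intro glim_pos_if_Glim_pos) auto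
    with True show ?thesis
      unfolding if_P[OF True[folded regular_iff]] using Vk_asymptotics_regular
      by (simp add: Vk_centre_def tendsto_prob_def dist_real_def)
  next
    case False
    then show ?thesis
      unfolding if_not_P[OF False[folded regular_iff]] using Vk_asymptotics_degenerate
      by (simp add: tendsto_prob_def dist_real_def)
  qed
qed

end
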